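(* Let $Q$ be an $[[n,k,d]]$ stabilizer code with codespace projector $P_Q$ whose Shor–Laflamme enumerators satisfy $A_{2i+1}=0$ for all $i$. Then $$B_n\le\frac{1}{L(n)}\,\frac{3^n}{2^{n-k}}.$$
   Context: For an $[[n,k,d]]$ stabilizer code with projector $P_Q$ onto its $2^k$-dimensional codespace, the Shor–Laflamme enumerators are $A_i=\frac{1}{2^{2k}}\sum_{\sigma:w(\sigma)=i}\mathrm{Tr}[\sigma P_Q]\mathrm{Tr}[\sigma^\dagger P_Q]$ and $B_i=\frac{1}{2^k}\sum_{\sigma:w(\sigma)=i}\mathrm{Tr}[\sigma P_Q\sigma^\dagger P_Q]$, where $\sigma$ ranges over the $n$-qubit Pauli operators $\{\mathbb{1},X,Y,Z\}^{\otimes n}$ and $w(\sigma)$ is the number of non-identity tensor factors. The quaternary Krawtchouk polynomials are $K_w(l)=\sum_{j=0}^{w}\binom{l}{j}\binom{n-l}{w-j}(-1)^j3^{w-j}$. $L(n)$ is the optimal value of the linear program in variables $y_0,\dots,y_{\lfloor n/2\rfloor}\in\mathbb{R}$: minimize $3^ny_0$ subject to $y_j\ge0$ for all $j$, $\sum_{j=0}^{\lfloor n/2\rfloor}K_i(2j)y_j\ge0$ for $i=0,\dots,n$, and $\sum_{j=0}^{\lfloor n/2\rfloor}3^{n-2j}y_j=1$. *)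

theory Defs
  imports "Jordan_Normal_Form.Schur_Decomposition"
begin

definition tr :: "complex mat \<Rightarrow> complex" where
  "tr A = (\<Sum>i<dim_row A. A $$ (i, i))"

definition kron :: "complex mat \<Rightarrow> complex mat \<Rightarrow> complex mat" where
  "kron A B = mat (dim_row A * dim_row B) (dim_col A * dim_col B)
     (\<lambda>(i, j). A $$ (i div dim_row B, j div dim_col B) * B $$ (i mod dim_row B, j mod dim_col B))"

text \<open>Single-qubit Paulis, indexed 0 = identity, 1 = X, 2 = Y, 3 = Z.\<close>
definition pauli1 :: "nat \<Rightarrow> complex mat" where
  "pauli1 a = (if a = 1 then mat_of_rows_list 2 [[0, 1], [1, 0]]
    else if a = 2 then mat_of_rows_list 2 [[0, -\<i>], [\<i>, 0]]
    else if a = 3 then mat_of_rows_list 2 [[1, 0], [0, -1]]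
    else 1\<^sub>m 2)"

fun pauli :: "nat list \<Rightarrow> complex mat" where
  "pauli [] = 1\<^sub>m 1"
| "pauli (a # as) = kron (pauli1 a) (pauli as)"

definition pauli_strings :: "nat \<Rightarrow> nat list set" where
  "pauli_strings n = {p. length p = n \<and> (\<forall>a\<in>set p. a < 4)}"

definition pweight :: "nat list \<Rightarrow> nat" where
  "pweight p = length (filter (\<lambda>a. a \<noteq> 0) p)"

definition pauli_group :: "nat \<Rightarrow> complex mat set" where
  "pauli_group n = {(\<i> ^ m) \<cdot>\<^sub>m pauli p | m p. m < 4 \<and> p \<in> pauli_strings n}"

definition stabilizer_group :: "nat \<Rightarrow> complex mat set \<Rightarrow> bool" where
  "stabilizer_group n S \<longleftrightarrow>
     S \<subseteq> pauli_group n \<and> 1\<^sub>m (2 ^ n) \<in> S \<and>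
     (\<forall>s\<in>S. \<forall>t\<in>S. s * t \<in> S) \<and>
     (\<forall>s\<in>S. \<forall>t\<in>S. s * t = t * s) \<and>
     - 1\<^sub>m (2 ^ n) \<notin> S"

definition codespace :: "nat \<Rightarrow> complex mat set \<Rightarrow> complex vec set" where
  "codespace n S = {v \<in> carrier_vec (2 ^ n). \<forall>s\<in>S. s *\<^sub>v v = v}"

definition codespace_projector :: "nat \<Rightarrow> complex mat set \<Rightarrow> complex mat \<Rightarrow> bool" where
  "codespace_projector n S P \<longleftrightarrow>
     P \<in> carrier_mat (2 ^ n) (2 ^ n) \<and> mat_adjoint P = P \<and> P * P = P \<and>
     (\<forall>v \<in> carrier_vec (2 ^ n). P *\<^sub>v v = v \<longleftrightarrow> v \<in> codespace n S)"

text \<open>Q is an [[n,k]] stabilizer code with stabilizer S and codespace projector P;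
  the codespace has dimension 2^k (= rank = trace of the orthogonal projector P).
  The distance d plays no role in the statement.\<close>
definition stabilizer_code :: "nat \<Rightarrow> nat \<Rightarrow> complex mat set \<Rightarrow> complex mat \<Rightarrow> bool" where
  "stabilizer_code n k S P \<longleftrightarrow>
     stabilizer_group n S \<and> codespace_projector n S P \<and> tr P = of_nat (2 ^ k)"

definition SL_A :: "nat \<Rightarrow> nat \<Rightarrow> complex mat \<Rightarrow> nat \<Rightarrow> complex" where
  "SL_A n k P i = (1 / 2 ^ (2 * k)) *
     (\<Sum>p \<in> {p \<in> pauli_strings n. pweight p = i}.
        tr (pauli p * P) * tr (mat_adjoint (pauli p) * P))"

definition SL_B :: "nat \<Rightarrow> nat \<Rightarrow> complex mat \<Rightarrow> nat \<Rightarrow> complex" where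
  "SL_B n k P i = (1 / 2 ^ k) *
     (\<Sum>p \<in> {p \<in> pauli_strings n. pweight p = i}.
        tr (pauli p * P * mat_adjoint (pauli p) * P))"

definition kraw :: "nat \<Rightarrow> nat \<Rightarrow> nat \<Rightarrow> real" where
  "kraw n w l = (\<Sum>j = 0..w. real (l choose j) * real ((n - l) choose (w - j)) * (-1) ^ j * 3 ^ (w - j))"

definition LP_feasible :: "nat \<Rightarrow> (nat \<Rightarrow> real) \<Rightarrow> bool" where
  "LP_feasible n y \<longleftrightarrow>
     (\<forall>j \<le> n div 2. y j \<ge> 0) \<and>
     (\<forall>i \<le> n. (\<Sum>j = 0..n div 2. kraw n i (2 * j) * y j) \<ge> 0) \<and>
     (\<Sum>j = 0..n div 2. 3 ^ (n - 2 * j) * y j) = 1"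

text \<open>Optimal value of the LP (infimum of the objective over feasible points;
  only y 0 .. y (n div 2) are variables).\<close>
definition L :: "nat \<Rightarrow> real" where
  "L n = Inf {3 ^ n * y 0 | y. LP_feasible n y}"

end

theory Submission
  imports Defs
begin

text \<open>
  Let P be an orthogonal projector on n qubits with tr P = 2^k, and let A_l, B_i be its
  Shor--Laflamme enumerators (up to normalisation). Both enumerator polynomials are bilinear
  in P with kernels that factor over the qubits, so the quantum MacWilliams identity
  2^n B_i = \<Sum>_l K_i(l) A_l reduces to a finite check on the single-qubit Paulis. Moreover
  A_l = \<Sum> |tr(\<sigma>P)|^2 and B_i = \<Sum> \<parallel>P\<sigma>P\<parallel>^2 are nonnegative. If the odd A_l vanish, then
  y_j = A_{2j} / (2^n B_n) is feasible for the linear program: its constraints are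
  2^n B_i \<ge> 0, and its normalisation holds because K_n(l) = (-1)^l 3^(n-l), so that
  \<Sum>_j 3^(n-2j) A_{2j} = \<Sum>_l K_n(l) A_l = 2^n B_n. Hence L(n) \<le> 3^n A_0 / (2^n B_n) with
  A_0 = 4^k, which rearranges to the bound. Summing the constraints of the program over i
  shows 4^n y_0 \<ge> 1 for every feasible y, so L(n) > 0.
\<close>

lemma mat_adjoint_dim [simp]:
  "dim_row (mat_adjoint A) = dim_col A" "dim_col (mat_adjoint A) = dim_row A"
  by (auto simp: mat_adjoint_def)

lemma mat_adjoint_index:
  fixes A :: "complex mat"
  assumes "i < dim_col A" "j < dim_row A"
  shows "mat_adjoint A $$ (i, j) = cnj (A $$ (j, i))"
  using assms by (simp add: mat_adjoint_def mat_of_rows_index)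

lemma mat_adjoint_one: "mat_adjoint (1\<^sub>m m :: complex mat) = 1\<^sub>m m"
  by (rule eq_matI) (auto simp: mat_adjoint_index)

lemma mat_adjoint_mult:
  fixes A B :: "complex mat"
  assumes "A \<in> carrier_mat m l" "B \<in> carrier_mat l r"
  shows "mat_adjoint (A * B) = mat_adjoint B * mat_adjoint A"
  using assms
  by (intro eq_matI) (auto simp: mat_adjoint_index scalar_prod_def mult.commute)

lemma index_mult_mat_sum:
  "i < dim_row A \<Longrightarrow> j < dim_col B \<Longrightarrow> dim_col A = dim_row B \<Longrightarrow>
    (A * B) $$ (i, j) = (\<Sum>k<dim_row B. A $$ (i, k) * B $$ (k, j))"
  by (simp add: scalar_prod_def atLeast0LessThan)

lemma tr_mult_commute:
  assumes "A \<in> carrier_mat m l" "B \<in> carrier_mat l m"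
  shows "tr (A * B) = tr (B * A)"
  using assms by (simp add: tr_def scalar_prod_def atLeast0LessThan sum.swap[of _ "{..<m}"] mult.commute)

lemma tr_mat_adjoint: "A \<in> carrier_mat m m \<Longrightarrow> tr (mat_adjoint A) = cnj (tr A)"
  by (simp add: tr_def mat_adjoint_index)

lemma tr_adjoint_mult_hermitian:
  fixes S P :: "complex mat"
  assumes S: "S \<in> carrier_mat m m" and P: "P \<in> carrier_mat m m" "mat_adjoint P = P"
  shows "tr (mat_adjoint S * P) = cnj (tr (S * P))"
proof -
  have "tr (mat_adjoint S * P) = tr (mat_adjoint (P * S))"
    using S P by (simp add: mat_adjoint_mult[of P m m S m])
  also have "\<dots> = cnj (tr (P * S))"
    using S P by (simp add: tr_mat_adjoint[of _ m])
  also have "tr (P * S) = tr (S * P)"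
    using P(1) S by (rule tr_mult_commute)
  finally show ?thesis .
qed

lemma tr_mult_mat_adjoint_self:
  assumes "M \<in> carrier_mat m l"
  shows "tr (M * mat_adjoint M) = of_real (\<Sum>i<m. \<Sum>k<l. (cmod (M $$ (i, k)))\<^sup>2)"
  using assms
  by (simp add: tr_def scalar_prod_def atLeast0LessThan mat_adjoint_index complex_norm_square
      del: of_real_power)

lemma tr_sandwich_projector_nonneg:
  fixes S P :: "complex mat"
  assumes S: "S \<in> carrier_mat m m"
    and P: "P \<in> carrier_mat m m" "mat_adjoint P = P" "P * P = P"
  shows "0 \<le> Re (tr (S * P * mat_adjoint S * P))"
proof -
  define X where "X = S * P * mat_adjoint S * P"
  have S': "mat_adjoint S \<in> carrier_mat m m" using S by auto
  have X: "X \<in> carrier_mat m m" unfolding X_def by (meson S S' P(1) mult_carrier_mat)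
  have absorb: "P * (P * Y) = P * Y" if "Y \<in> carrier_mat m m" for Y
    using P that by (simp flip: assoc_mult_mat[of P m m P m Y m])
  have "tr ((P * S * P) * mat_adjoint (P * S * P)) = tr ((P * S * P) * (P * mat_adjoint S * P))"
    using S P by (simp add: mat_adjoint_mult[of _ m m _ m])
  also have "(P * S * P) * (P * mat_adjoint S * P) = P * X"
    using S S' P by (simp add: X_def assoc_mult_mat[of _ m m _ m _ m] absorb)
  also have "tr (P * X) = tr (X * P)"
    using P(1) X by (rule tr_mult_commute)
  also have "X * P = X"
    using S S' P by (simp add: X_def assoc_mult_mat[of _ m m _ m _ m])
  finally have "tr X = of_real (\<Sum>i<m. \<Sum>k<m. (cmod ((P * S * P) $$ (i, k)))\<^sup>2)"
    using S P by (simp add: tr_mult_mat_adjoint_self[of _ m m])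
  then show ?thesis by (simp add: X_def sum_nonneg)
qed

lemma tr_mult_expand:
  assumes "S \<in> carrier_mat m m" "M \<in> carrier_mat m m"
  shows "tr (S * M) = (\<Sum>b<m. \<Sum>a<m. M $$ (a, b) * S $$ (b, a))"
  using assms by (simp add: tr_def index_mult_mat_sum mult.commute del: index_mult_mat(1))

lemma tr_adjoint_mult_expand:
  assumes "S \<in> carrier_mat m m" "N \<in> carrier_mat m m"
  shows "tr (mat_adjoint S * N) = (\<Sum>d<m. \<Sum>c<m. N $$ (c, d) * cnj (S $$ (c, d)))"
  using assms
  by (simp add: tr_def index_mult_mat_sum mat_adjoint_index mult.commute del: index_mult_mat(1))

lemma tr_sandwich_expand:
  assumes "S \<in> carrier_mat m m" "M \<in> carrier_mat m m" "N \<in> carrier_mat m m"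
  shows "tr (S * M * mat_adjoint S * N) =
    (\<Sum>d<m. \<Sum>c<m. \<Sum>b<m. \<Sum>a<m. M $$ (a, b) * N $$ (c, d) * (S $$ (d, a) * cnj (S $$ (c, b))))"
proof -
  have "tr (S * M * mat_adjoint S * N) =
      (\<Sum>d<m. \<Sum>c<m. (\<Sum>b<m. (\<Sum>a<m. S $$ (d, a) * M $$ (a, b)) * cnj (S $$ (c, b))) * N $$ (c, d))"
    using assms by (simp add: tr_def index_mult_mat_sum mat_adjoint_index del: index_mult_mat(1))
  also have "\<dots> = (\<Sum>d<m. \<Sum>c<m. \<Sum>b<m. \<Sum>a<m.
      M $$ (a, b) * N $$ (c, d) * (S $$ (d, a) * cnj (S $$ (c, b))))"
    by (simp only: sum_distrib_right) (intro sum.cong refl; simp add: ac_simps)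
  finally show ?thesis .
qed

lemma kron_index:
  assumes "i < dim_row A * dim_row B" "j < dim_col A * dim_col B"
  shows "kron A B $$ (i, j) =
    A $$ (i div dim_row B, j div dim_col B) * B $$ (i mod dim_row B, j mod dim_col B)"
  using assms by (simp add: kron_def)

lemma kron_one: "kron (1\<^sub>m a) (1\<^sub>m b) = 1\<^sub>m (a * b)"
proof (rule eq_matI)
  fix i j assume "i < dim_row (1\<^sub>m (a * b) :: complex mat)" "j < dim_col (1\<^sub>m (a * b) :: complex mat)"
  then have ij: "i < a * b" "j < a * b" by auto
  then have "0 < b" by (cases "b = 0") auto
  then have "i div b < a" "j div b < a" "i mod b < b" "j mod b < b"
    using ij by (auto simp: less_mult_imp_div_less mult.commute)
  moreover have "i = j \<longleftrightarrow> i div b = j div b \<and> i mod b = j mod b"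
    by (metis div_mult_mod_eq)
  ultimately show "kron (1\<^sub>m a) (1\<^sub>m b) $$ (i, j) = 1\<^sub>m (a * b) $$ (i, j)"
    using ij by (auto simp: kron_index)
qed (simp_all add: kron_def)

lemma pauli1_dim [simp]: "dim_row (pauli1 a) = 2" "dim_col (pauli1 a) = 2"
  by (auto simp: pauli1_def mat_of_rows_list_def)

lemma pauli_dim [simp]: "dim_row (pauli p) = 2 ^ length p" "dim_col (pauli p) = 2 ^ length p"
  by (induct p) (auto simp: kron_def)

lemma pauli_Cons_index:
  assumes "i < 2 * 2 ^ length p" "j < 2 * 2 ^ length p"
  shows "pauli (q # p) $$ (i, j) = pauli1 q $$ (i div 2 ^ length p, j div 2 ^ length p)
    * pauli p $$ (i mod 2 ^ length p, j mod 2 ^ length p)"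
  using assms by (simp add: kron_index)

lemma pauli_replicate_0: "pauli (replicate n 0) = 1\<^sub>m (2 ^ n)"
  by (induct n) (simp_all add: pauli1_def kron_one)

lemma pauli_strings_0: "pauli_strings 0 = {[]}"
  by (auto simp: pauli_strings_def)

lemma length_pauli_strings: "p \<in> pauli_strings n \<Longrightarrow> length p = n"
  by (simp add: pauli_strings_def)

lemma pauli_strings_carrier: "p \<in> pauli_strings n \<Longrightarrow> pauli p \<in> carrier_mat (2 ^ n) (2 ^ n)"
  by (simp add: length_pauli_strings carrier_matI)

lemma pauli_strings_Suc: "pauli_strings (Suc n) = (\<lambda>(q, p). q # p) ` ({..<4} \<times> pauli_strings n)"
  by (auto simp: pauli_strings_def image_iff length_Suc_conv)

lemma finite_pauli_strings: "finite (pauli_strings n)"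
  by (induct n) (simp_all add: pauli_strings_0 pauli_strings_Suc)

lemma sum_pauli_strings_Suc:
  "(\<Sum>p\<in>pauli_strings (Suc n). f p) = (\<Sum>q<4. \<Sum>p\<in>pauli_strings n. f (q # p))"
proof -
  have "inj_on (\<lambda>(q, p). q # p) ({..<4::nat} \<times> pauli_strings n)"
    by (auto simp: inj_on_def)
  then show ?thesis
    by (simp add: pauli_strings_Suc sum.reindex sum.cartesian_product split_def)
qed

lemma pweight_le_length: "pweight p \<le> length p"
  by (simp add: pweight_def)

lemma pauli_strings_pweight_0: "{p \<in> pauli_strings n. pweight p = 0} = {replicate n 0}"
  by (auto simp: pauli_strings_def pweight_def filter_empty_conv intro!: replicate_eqI)

lemma sum_pauli_strings_by_pweight:
  "(\<Sum>p\<in>pauli_strings n. f p) = (\<Sum>i\<le>n. \<Sum>p\<in>{p \<in> pauli_strings n. pweight p = i}. f p)"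
  using finite_pauli_strings[of n]
  by (intro sum.group[symmetric]) (auto simp: pauli_strings_def intro: order.trans[OF pweight_le_length])

section \<open>The quantum MacWilliams identity\<close>

definition weight_monomial :: "complex \<Rightarrow> complex \<Rightarrow> nat list \<Rightarrow> complex" where
  "weight_monomial x y p = x ^ (length p - pweight p) * y ^ pweight p"

lemma weight_monomial_Cons:
  "weight_monomial x y (q # p) = (if q = 0 then x else y) * weight_monomial x y p"
  using pweight_le_length[of p]
  by (auto simp: weight_monomial_def pweight_def Suc_diff_le)

definition pauli_kernel :: "nat \<Rightarrow> complex \<Rightarrow> complex \<Rightarrow> nat \<Rightarrow> nat \<Rightarrow> nat \<Rightarrow> nat \<Rightarrow> complex" where
  "pauli_kernel n x y i j k l =
     (\<Sum>p\<in>pauli_strings n. weight_monomial x y p * pauli p $$ (i, j) * cnj (pauli p $$ (k, l)))"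

definition A_poly :: "nat \<Rightarrow> complex mat \<Rightarrow> complex mat \<Rightarrow> complex \<Rightarrow> complex \<Rightarrow> complex" where
  "A_poly n M N x y = (\<Sum>p\<in>pauli_strings n.
     weight_monomial x y p * (tr (pauli p * M) * tr (mat_adjoint (pauli p) * N)))"

definition B_poly :: "nat \<Rightarrow> complex mat \<Rightarrow> complex mat \<Rightarrow> complex \<Rightarrow> complex \<Rightarrow> complex" where
  "B_poly n M N x y = (\<Sum>p\<in>pauli_strings n.
     weight_monomial x y p * tr (pauli p * M * mat_adjoint (pauli p) * N))"

lemma A_poly_kernel:
  assumes "M \<in> carrier_mat (2 ^ n) (2 ^ n)" "N \<in> carrier_mat (2 ^ n) (2 ^ n)"
  shows "A_poly n M N x y = (\<Sum>d<2 ^ n. \<Sum>c<2 ^ n. \<Sum>b<2 ^ n. \<Sum>a<2 ^ n.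
    M $$ (a, b) * N $$ (c, d) * pauli_kernel n x y b a c d)"
proof -
  have "A_poly n M N x y = (\<Sum>p\<in>pauli_strings n. \<Sum>d<2 ^ n. \<Sum>c<2 ^ n. \<Sum>b<2 ^ n. \<Sum>a<2 ^ n.
      M $$ (a, b) * N $$ (c, d) * (weight_monomial x y p * pauli p $$ (b, a) * cnj (pauli p $$ (c, d))))"
    unfolding A_poly_def
  proof (intro sum.cong refl)
    fix p assume "p \<in> pauli_strings n"
    then have S: "pauli p \<in> carrier_mat (2 ^ n) (2 ^ n)"
      by (rule pauli_strings_carrier)
    show "weight_monomial x y p * (tr (pauli p * M) * tr (mat_adjoint (pauli p) * N)) =
      (\<Sum>d<2 ^ n. \<Sum>c<2 ^ n. \<Sum>b<2 ^ n. \<Sum>a<2 ^ n.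
        M $$ (a, b) * N $$ (c, d) * (weight_monomial x y p * pauli p $$ (b, a) * cnj (pauli p $$ (c, d))))"
      unfolding mult.commute[of "tr (pauli p * M)"]
        tr_mult_expand[OF S assms(1)] tr_adjoint_mult_expand[OF S assms(2)]
      by (simp only: sum_distrib_left sum_distrib_right) (intro sum.cong refl; simp add: ac_simps)
  qed
  also have "\<dots> = (\<Sum>d<2 ^ n. \<Sum>c<2 ^ n. \<Sum>b<2 ^ n. \<Sum>a<2 ^ n. \<Sum>p\<in>pauli_strings n.
      M $$ (a, b) * N $$ (c, d) * (weight_monomial x y p * pauli p $$ (b, a) * cnj (pauli p $$ (c, d))))"
    by (simp only: sum.swap[of _ "pauli_strings n"])
  finally show ?thesis
    by (simp only: pauli_kernel_def sum_distrib_left)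
qed

lemma B_poly_kernel:
  assumes "M \<in> carrier_mat (2 ^ n) (2 ^ n)" "N \<in> carrier_mat (2 ^ n) (2 ^ n)"
  shows "B_poly n M N x y = (\<Sum>d<2 ^ n. \<Sum>c<2 ^ n. \<Sum>b<2 ^ n. \<Sum>a<2 ^ n.
    M $$ (a, b) * N $$ (c, d) * pauli_kernel n x y d a c b)"
proof -
  have "B_poly n M N x y = (\<Sum>p\<in>pauli_strings n. \<Sum>d<2 ^ n. \<Sum>c<2 ^ n. \<Sum>b<2 ^ n. \<Sum>a<2 ^ n.
      M $$ (a, b) * N $$ (c, d) * (weight_monomial x y p * pauli p $$ (d, a) * cnj (pauli p $$ (c, b))))"
    unfolding B_poly_def
  proof (intro sum.cong refl)
    fix p assume "p \<in> pauli_strings n"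
    then have S: "pauli p \<in> carrier_mat (2 ^ n) (2 ^ n)"
      by (rule pauli_strings_carrier)
    show "weight_monomial x y p * tr (pauli p * M * mat_adjoint (pauli p) * N) =
      (\<Sum>d<2 ^ n. \<Sum>c<2 ^ n. \<Sum>b<2 ^ n. \<Sum>a<2 ^ n.
        M $$ (a, b) * N $$ (c, d) * (weight_monomial x y p * pauli p $$ (d, a) * cnj (pauli p $$ (c, b))))"
      unfolding tr_sandwich_expand[OF S assms]
      by (simp only: sum_distrib_left) (intro sum.cong refl; simp add: ac_simps)
  qed
  also have "\<dots> = (\<Sum>d<2 ^ n. \<Sum>c<2 ^ n. \<Sum>b<2 ^ n. \<Sum>a<2 ^ n. \<Sum>p\<in>pauli_strings n.
      M $$ (a, b) * N $$ (c, d) * (weight_monomial x y p * pauli p $$ (d, a) * cnj (pauli p $$ (c, b))))"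
    by (simp only: sum.swap[of _ "pauli_strings n"])
  finally show ?thesis
    by (simp only: pauli_kernel_def sum_distrib_left)
qed

definition qubit_kernel :: "complex \<Rightarrow> complex \<Rightarrow> nat \<Rightarrow> nat \<Rightarrow> nat \<Rightarrow> nat \<Rightarrow> complex" where
  "qubit_kernel x y i j k l =
     (\<Sum>q<4. (if q = 0 then x else y) * pauli1 q $$ (i, j) * cnj (pauli1 q $$ (k, l)))"

lemma pauli_kernel_Suc:
  assumes "i < 2 * 2 ^ n" "j < 2 * 2 ^ n" "k < 2 * 2 ^ n" "l < 2 * 2 ^ n"
  shows "pauli_kernel (Suc n) x y i j k l =
    qubit_kernel x y (i div 2 ^ n) (j div 2 ^ n) (k div 2 ^ n) (l div 2 ^ n) *
    pauli_kernel n x y (i mod 2 ^ n) (j mod 2 ^ n) (k mod 2 ^ n) (l mod 2 ^ n)"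
proof -
  have "weight_monomial x y (q # p) * pauli (q # p) $$ (i, j) * cnj (pauli (q # p) $$ (k, l)) =
      (if q = 0 then x else y) * pauli1 q $$ (i div 2 ^ n, j div 2 ^ n)
        * cnj (pauli1 q $$ (k div 2 ^ n, l div 2 ^ n)) *
      (weight_monomial x y p * pauli p $$ (i mod 2 ^ n, j mod 2 ^ n)
        * cnj (pauli p $$ (k mod 2 ^ n, l mod 2 ^ n)))"
    if "p \<in> pauli_strings n" for q p
    using assms pauli_Cons_index[of i p j q] pauli_Cons_index[of k p l q]
    by (simp add: weight_monomial_Cons length_pauli_strings[OF that] del: pauli.simps)
  then show ?thesis
    by (simp add: pauli_kernel_def qubit_kernel_def sum_pauli_strings_Suc sum_product)
qed

lemma qubit_kernel_MacWilliams:
  assumes "a < 2" "b < 2" "c < 2" "d < 2"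
  shows "qubit_kernel x y d a c b = qubit_kernel ((x + 3 * y) / 2) ((x - y) / 2) b a c d"
proof -
  have "(\<Sum>q<4::nat. f q) = f 0 + f 1 + f 2 + f 3" for f :: "nat \<Rightarrow> complex"
    by (simp add: eval_nat_numeral)
  moreover have "a \<in> {0, 1}" "b \<in> {0, 1}" "c \<in> {0, 1}" "d \<in> {0, 1}"
    using assms by auto
  ultimately show ?thesis
    by (auto simp: qubit_kernel_def pauli1_def mat_of_rows_list_def field_simps)
qed

lemma pauli_kernel_MacWilliams:
  assumes "a < 2 ^ n" "b < 2 ^ n" "c < 2 ^ n" "d < 2 ^ n"
  shows "pauli_kernel n x y d a c b = pauli_kernel n ((x + 3 * y) / 2) ((x - y) / 2) b a c d"
  using assms
proof (induct n arbitrary: a b c d)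
  case 0
  then show ?case by (simp add: pauli_kernel_def weight_monomial_def pweight_def pauli_strings_0)
next
  case (Suc n)
  let ?N = "2 ^ n :: nat"
  have lt: "a < 2 * ?N" "b < 2 * ?N" "c < 2 * ?N" "d < 2 * ?N"
    using Suc.prems by simp_all
  then have "a div ?N < 2" "b div ?N < 2" "c div ?N < 2" "d div ?N < 2"
    by (simp_all add: less_mult_imp_div_less)
  moreover have "a mod ?N < ?N" "b mod ?N < ?N" "c mod ?N < ?N" "d mod ?N < ?N"
    by simp_all
  \<comment> \<open>Instantiated, since otherwise the rule rewrites its own right-hand side.\<close>
  ultimately show ?case
    using lt by (simp only: pauli_kernel_Suc qubit_kernel_MacWilliams[where x = x and y = y] Suc.hyps)
qed

lemma B_poly_MacWilliams:
  assumes "M \<in> carrier_mat (2 ^ n) (2 ^ n)" "N \<in> carrier_mat (2 ^ n) (2 ^ n)"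
  shows "B_poly n M N x y = A_poly n M N ((x + 3 * y) / 2) ((x - y) / 2)"
  unfolding B_poly_kernel[OF assms] A_poly_kernel[OF assms]
  by (intro sum.cong refl) (simp add: pauli_kernel_MacWilliams[where x = x and y = y])

section \<open>Krawtchouk polynomials\<close>

lemma kraw_generating_function:
  assumes "l \<le> n"
  shows "(1 - t) ^ l * (1 + 3 * t) ^ (n - l) = (\<Sum>i\<le>n. complex_of_real (kraw n i l) * t ^ i)"
proof -
  have binomial_1: "(1 - t) ^ l = (\<Sum>j\<le>l. of_nat (l choose j) * (-1) ^ j * t ^ j)"
  proof -
    have "(1 - t) ^ l = (-t + 1) ^ l" by simp
    also have "\<dots> = (\<Sum>j\<le>l. of_nat (l choose j) * (-t) ^ j * 1 ^ (l - j))" by (rule binomial_ring)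
    also have "\<dots> = (\<Sum>j\<le>l. of_nat (l choose j) * (-1) ^ j * t ^ j)"
      by (intro sum.cong refl) (simp only: power_one mult_1_right power_minus[of t] mult.assoc)
    finally show ?thesis .
  qed
  have binomial_2: "(1 + 3 * t) ^ (n - l) = (\<Sum>j\<le>n - l. of_nat ((n - l) choose j) * 3 ^ j * t ^ j)"
  proof -
    have "(1 + 3 * t) ^ (n - l) = (3 * t + 1) ^ (n - l)" by (simp only: add.commute)
    also have "\<dots> = (\<Sum>j\<le>n - l. of_nat ((n - l) choose j) * (3 * t) ^ j * 1 ^ (n - l - j))"
      by (rule binomial_ring)
    also have "\<dots> = (\<Sum>j\<le>n - l. of_nat ((n - l) choose j) * 3 ^ j * t ^ j)"
      by (intro sum.cong refl) (simp only: power_one mult_1_right power_mult_distrib mult.assoc)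
    finally show ?thesis .
  qed
  have "(1 - t) ^ l * (1 + 3 * t) ^ (n - l) = (\<Sum>r\<le>l + (n - l).
      (\<Sum>j\<le>r. (of_nat (l choose j) * (-1) ^ j) * (of_nat ((n - l) choose (r - j)) * 3 ^ (r - j))) * t ^ r)"
    unfolding binomial_1 binomial_2 by (rule polynomial_product) simp_all
  also have "\<dots> = (\<Sum>i\<le>n. complex_of_real (kraw n i l) * t ^ i)"
    using assms by (intro sum.cong) (simp_all add: kraw_def atLeast0AtMost ac_simps)
  finally show ?thesis .
qed

lemma kraw_0_degree: "kraw n 0 l = 1"
  by (simp add: kraw_def)

lemma kraw_top_degree:
  assumes "l \<le> n"
  shows "kraw n n l = (-1) ^ l * 3 ^ (n - l)"
proof -
  have "kraw n n l = (\<Sum>j = 0..n. if j = l then (-1) ^ l * 3 ^ (n - l) else 0)"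
    unfolding kraw_def
  proof (intro sum.cong refl)
    fix j assume "j \<in> {0..n}"
    then have "j \<noteq> l \<Longrightarrow> l < j \<or> n - l < n - j"
      using assms by auto
    then show "real (l choose j) * real (n - l choose (n - j)) * (-1) ^ j * 3 ^ (n - j) =
        (if j = l then (-1) ^ l * 3 ^ (n - l) else 0)"
      by (auto simp: binomial_eq_0)
  qed
  also have "\<dots> = (-1) ^ l * 3 ^ (n - l)"
    using assms by simp
  finally show ?thesis .
qed

lemma sum_kraw_degrees:
  assumes "l \<le> n"
  shows "(\<Sum>i\<le>n. kraw n i l) = (if l = 0 then 4 ^ n else 0)"
proof -
  have "complex_of_real (\<Sum>i\<le>n. kraw n i l) = (1 - 1) ^ l * (1 + 3 * 1) ^ (n - l)"
    using kraw_generating_function[OF assms, of 1] by simp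
  also have "\<dots> = complex_of_real (if l = 0 then 4 ^ n else 0)"
    by simp
  finally show ?thesis
    by (simp only: of_real_eq_iff)
qed

text \<open>A_enum and B_enum are 4^k SL_A and 2^k SL_B for a codespace of dimension 2^k.\<close>

definition A_enum :: "nat \<Rightarrow> complex mat \<Rightarrow> nat \<Rightarrow> complex" where
  "A_enum n P i = (\<Sum>p\<in>{p \<in> pauli_strings n. pweight p = i}.
     tr (pauli p * P) * tr (mat_adjoint (pauli p) * P))"

definition B_enum :: "nat \<Rightarrow> complex mat \<Rightarrow> nat \<Rightarrow> complex" where
  "B_enum n P i = (\<Sum>p\<in>{p \<in> pauli_strings n. pweight p = i}.
     tr (pauli p * P * mat_adjoint (pauli p) * P))"

lemma A_poly_A_enum: "A_poly n P P x y = (\<Sum>i\<le>n. x ^ (n - i) * y ^ i * A_enum n P i)"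
  unfolding A_poly_def A_enum_def sum_pauli_strings_by_pweight[where n = n] sum_distrib_left
  by (intro sum.cong refl) (simp add: weight_monomial_def length_pauli_strings)

lemma B_poly_B_enum: "B_poly n P P x y = (\<Sum>i\<le>n. x ^ (n - i) * y ^ i * B_enum n P i)"
  unfolding B_poly_def B_enum_def sum_pauli_strings_by_pweight[where n = n] sum_distrib_left
  by (intro sum.cong refl) (simp add: weight_monomial_def length_pauli_strings)

lemma B_enum_MacWilliams:
  assumes P: "P \<in> carrier_mat (2 ^ n) (2 ^ n)" and "i \<le> n"
  shows "2 ^ n * B_enum n P i = (\<Sum>l\<le>n. complex_of_real (kraw n i l) * A_enum n P l)"
proof -
  have rescale: "2 ^ n * (((1 + 3 * t) / 2) ^ (n - l) * ((1 - t) / 2) ^ l) = (1 - t) ^ l * (1 + 3 * t) ^ (n - l)"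
    if "l \<le> n" for l and t :: complex
  proof -
    have "(2 :: complex) ^ n = 2 ^ (n - l) * 2 ^ l"
      using that by (simp flip: power_add)
    then show ?thesis by (simp add: power_divide)
  qed
  have generating_functions: "(\<Sum>i\<le>n. (2 ^ n * B_enum n P i) * t ^ i) =
      (\<Sum>i\<le>n. (\<Sum>l\<le>n. complex_of_real (kraw n i l) * A_enum n P l) * t ^ i)" for t :: complex
  proof -
    have "(\<Sum>i\<le>n. (2 ^ n * B_enum n P i) * t ^ i) = 2 ^ n * B_poly n P P 1 t"
      by (simp add: B_poly_B_enum sum_distrib_left ac_simps)
    also have "\<dots> = 2 ^ n * A_poly n P P ((1 + 3 * t) / 2) ((1 - t) / 2)"
      by (simp only: B_poly_MacWilliams[OF P P] mult_1_left mult_1_right)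
    also have "\<dots> = (\<Sum>l\<le>n. (1 - t) ^ l * (1 + 3 * t) ^ (n - l) * A_enum n P l)"
      unfolding A_poly_A_enum sum_distrib_left
      by (intro sum.cong refl) (simp add: rescale[symmetric] mult.assoc)
    also have "\<dots> = (\<Sum>l\<le>n. \<Sum>i\<le>n. complex_of_real (kraw n i l) * A_enum n P l * t ^ i)"
    proof (intro sum.cong refl)
      fix l assume "l \<in> {..n}"
      then have "l \<le> n" by simp
      show "(1 - t) ^ l * (1 + 3 * t) ^ (n - l) * A_enum n P l =
          (\<Sum>i\<le>n. complex_of_real (kraw n i l) * A_enum n P l * t ^ i)"
        unfolding kraw_generating_function[OF \<open>l \<le> n\<close>] sum_distrib_right
        by (intro sum.cong refl) (simp add: ac_simps)
    qed
    also have "\<dots> = (\<Sum>i\<le>n. (\<Sum>l\<le>n. complex_of_real (kraw n i l) * A_enum n P l) * t ^ i)"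
      by (subst sum.swap) (simp only: sum_distrib_right)
    finally show ?thesis .
  qed
  have "\<forall>i\<le>n. 2 ^ n * B_enum n P i = (\<Sum>l\<le>n. complex_of_real (kraw n i l) * A_enum n P l)"
    by (subst polyfun_eq_coeffs[symmetric]) (simp only: generating_functions simp_thms)
  with \<open>i \<le> n\<close> show ?thesis by blast
qed

lemma A_enum_eq_sum_norms:
  assumes "P \<in> carrier_mat (2 ^ n) (2 ^ n)" "mat_adjoint P = P"
  shows "A_enum n P i =
    of_real (\<Sum>p\<in>{p \<in> pauli_strings n. pweight p = i}. (cmod (tr (pauli p * P)))\<^sup>2)"
  unfolding A_enum_def of_real_sum
proof (intro sum.cong refl)
  fix p assume "p \<in> {p \<in> pauli_strings n. pweight p = i}"
  then have "pauli p \<in> carrier_mat (2 ^ n) (2 ^ n)" by (simp add: pauli_strings_carrier)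
  then show "tr (pauli p * P) * tr (mat_adjoint (pauli p) * P) = of_real ((cmod (tr (pauli p * P)))\<^sup>2)"
    by (simp add: tr_adjoint_mult_hermitian assms complex_norm_square del: of_real_power)
qed

lemma A_enum_Re_nonneg:
  assumes "P \<in> carrier_mat (2 ^ n) (2 ^ n)" "mat_adjoint P = P"
  shows "0 \<le> Re (A_enum n P i)"
  by (simp add: A_enum_eq_sum_norms[OF assms] sum_nonneg)

lemma B_enum_Re_nonneg:
  assumes "P \<in> carrier_mat (2 ^ n) (2 ^ n)" "mat_adjoint P = P" "P * P = P"
  shows "0 \<le> Re (B_enum n P i)"
  unfolding B_enum_def Re_sum
  by (intro sum_nonneg tr_sandwich_projector_nonneg[OF _ assms]) (simp add: pauli_strings_carrier)

lemma A_enum_0: "P \<in> carrier_mat (2 ^ n) (2 ^ n) \<Longrightarrow> A_enum n P 0 = tr P * tr P"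
  by (simp add: A_enum_def pauli_strings_pweight_0 pauli_replicate_0 mat_adjoint_one)

lemma B_enum_0: "P \<in> carrier_mat (2 ^ n) (2 ^ n) \<Longrightarrow> P * P = P \<Longrightarrow> B_enum n P 0 = tr P"
  by (simp add: B_enum_def pauli_strings_pweight_0 pauli_replicate_0 mat_adjoint_one)

lemma Re_A_enum_0:
  assumes "P \<in> carrier_mat (2 ^ n) (2 ^ n)" "tr P = 2 ^ k"
  shows "Re (A_enum n P 0) = 4 ^ k"
  using assms by (simp add: A_enum_0 flip: power_mult_distrib)

lemma B_enum_MacWilliams_Re:
  assumes P: "P \<in> carrier_mat (2 ^ n) (2 ^ n)" "mat_adjoint P = P" and "i \<le> n"
  shows "(\<Sum>l\<le>n. kraw n i l * Re (A_enum n P l)) = 2 ^ n * Re (B_enum n P i)"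
proof -
  have "A_enum n P l = of_real (Re (A_enum n P l))" for l
    by (subst (1 2) A_enum_eq_sum_norms[OF P]) simp
  then have "of_real (\<Sum>l\<le>n. kraw n i l * Re (A_enum n P l)) = 2 ^ n * B_enum n P i"
    using B_enum_MacWilliams[OF P(1) \<open>i \<le> n\<close>] by (simp add: of_real_sum)
  from arg_cong[where f = Re, OF this] show ?thesis
    by simp
qed

lemma projector_rank_le:
  assumes P: "P \<in> carrier_mat (2 ^ n) (2 ^ n)" "mat_adjoint P = P" "P * P = P"
    and trP: "tr P = 2 ^ k"
  shows "k \<le> n"
proof -
  have "(2::real) ^ k * 2 ^ k = Re (A_enum n P 0)"
    using Re_A_enum_0[OF P(1) trP] by (simp flip: power_mult_distrib)
  also have "\<dots> \<le> (\<Sum>l\<le>n. Re (A_enum n P l))"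
    by (rule member_le_sum) (simp_all add: A_enum_Re_nonneg[OF P(1,2)])
  also have "\<dots> = 2 ^ n * Re (B_enum n P 0)"
    using B_enum_MacWilliams_Re[OF P(1,2), of 0] by (simp add: kraw_0_degree)
  also have "\<dots> = 2 ^ n * 2 ^ k"
    using B_enum_0[OF P(1,3)] trP by simp
  finally show "k \<le> n"
    by simp
qed

section \<open>The linear program\<close>

lemma sum_atMost_even_support:
  fixes f :: "nat \<Rightarrow> 'a :: comm_monoid_add"
  assumes "\<And>l. odd l \<Longrightarrow> f l = 0"
  shows "(\<Sum>l\<le>n. f l) = (\<Sum>j = 0..n div 2. f (2 * j))"
proof -
  have "(\<Sum>j = 0..n div 2. f (2 * j)) = (\<Sum>l\<in>(*) 2 ` {0..n div 2}. f l)"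
    by (simp add: sum.reindex inj_on_def)
  also have "\<dots> = (\<Sum>l\<le>n. f l)"
  proof (rule sum.mono_neutral_left)
    show "(*) 2 ` {0..n div 2} \<subseteq> {..n}" by auto
    show "\<forall>l\<in>{..n} - (*) 2 ` {0..n div 2}. f l = 0"
    proof
      fix l assume l: "l \<in> {..n} - (*) 2 ` {0..n div 2}"
      have "odd l"
      proof
        assume "even l"
        then have "l = 2 * (l div 2)" by simp
        moreover have "l div 2 \<in> {0..n div 2}" using l by (auto intro: div_le_mono)
        ultimately show False using l by blast
      qed
      then show "f l = 0" by (rule assms)
    qed
  qed simp
  finally show ?thesis by simp
qed

lemma LP_feasible_objective_lower_bound:
  assumes "LP_feasible n y"
  shows "3 ^ n / 4 ^ n \<le> 3 ^ n * y 0"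
proof -
  have dual: "\<And>i. i \<le> n \<Longrightarrow> 0 \<le> (\<Sum>j = 0..n div 2. kraw n i (2 * j) * y j)"
    and norm: "(\<Sum>j = 0..n div 2. 3 ^ (n - 2 * j) * y j) = 1"
    using assms by (auto simp: LP_feasible_def)
  have "1 = (\<Sum>j = 0..n div 2. kraw n n (2 * j) * y j)"
    unfolding norm[symmetric] by (intro sum.cong refl) (simp add: kraw_top_degree)
  also have "\<dots> \<le> (\<Sum>i\<le>n. \<Sum>j = 0..n div 2. kraw n i (2 * j) * y j)"
    by (rule member_le_sum[where f = "\<lambda>i. \<Sum>j = 0..n div 2. kraw n i (2 * j) * y j"])
      (auto intro: dual)
  also have "\<dots> = (\<Sum>j = 0..n div 2. (\<Sum>i\<le>n. kraw n i (2 * j)) * y j)"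
    by (simp add: sum_distrib_right sum.swap[of _ "{..n}"])
  also have "\<dots> = (\<Sum>j = 0..n div 2. if j = 0 then 4 ^ n * y j else 0)"
    by (intro sum.cong refl) (simp add: sum_kraw_degrees)
  also have "\<dots> = 4 ^ n * y 0"
    by simp
  finally show ?thesis
    by (simp add: field_simps)
qed

lemma L_pos:
  assumes "LP_feasible n y"
  shows "0 < L n"
proof -
  have "3 ^ n / 4 ^ n \<le> L n"
    unfolding L_def
    using assms LP_feasible_objective_lower_bound by (intro cInf_greatest) auto
  then show ?thesis
    by (rule less_le_trans[rotated]) simp
qed

lemma L_le_objective:
  assumes "LP_feasible n y"
  shows "L n \<le> 3 ^ n * y 0"
  unfolding L_def
  using assms LP_feasible_objective_lower_bound
  by (intro cInf_lower bdd_belowI[of _ "3 ^ n / 4 ^ n"]) auto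

lemma LP_feasible_normalized_enumerator:
  fixes a :: "nat \<Rightarrow> real" and n :: nat
  defines "Z \<equiv> \<Sum>l\<le>n. kraw n n l * a l"
  assumes nonneg: "\<And>l. 0 \<le> a l" and "0 < a 0" and odd: "\<And>l. odd l \<Longrightarrow> a l = 0"
    and dual: "\<And>i. i \<le> n \<Longrightarrow> 0 \<le> (\<Sum>l\<le>n. kraw n i l * a l)"
  shows "0 < Z" and "LP_feasible n (\<lambda>j. a (2 * j) / Z)"
proof -
  have even_sum: "(\<Sum>l\<le>n. kraw n i l * a l) = (\<Sum>j = 0..n div 2. kraw n i (2 * j) * a (2 * j))" for i
    by (rule sum_atMost_even_support) (simp add: odd)
  have Z_even: "Z = (\<Sum>j = 0..n div 2. 3 ^ (n - 2 * j) * a (2 * j))"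
    unfolding Z_def even_sum by (intro sum.cong refl) (simp add: kraw_top_degree)
  have "0 < 3 ^ n * a 0" using \<open>0 < a 0\<close> by simp
  also have "3 ^ n * a 0 \<le> Z"
    unfolding Z_even using member_le_sum[of 0 "{0..n div 2}" "\<lambda>j. 3 ^ (n - 2 * j) * a (2 * j)"]
    by (simp add: nonneg)
  finally show "0 < Z" .
  show "LP_feasible n (\<lambda>j. a (2 * j) / Z)"
    unfolding LP_feasible_def
  proof (intro conjI allI impI)
    fix j
    show "0 \<le> a (2 * j) / Z" using nonneg \<open>0 < Z\<close> by simp
  next
    fix i assume "i \<le> n"
    have "(\<Sum>j = 0..n div 2. kraw n i (2 * j) * (a (2 * j) / Z)) = (\<Sum>l\<le>n. kraw n i l * a l) / Z"
      unfolding even_sum sum_divide_distrib by simp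
    then show "0 \<le> (\<Sum>j = 0..n div 2. kraw n i (2 * j) * (a (2 * j) / Z))"
      using dual[OF \<open>i \<le> n\<close>] \<open>0 < Z\<close> by simp
  next
    have "(\<Sum>j = 0..n div 2. 3 ^ (n - 2 * j) * (a (2 * j) / Z)) = Z / Z"
      unfolding Z_even sum_divide_distrib by simp
    then show "(\<Sum>j = 0..n div 2. 3 ^ (n - 2 * j) * (a (2 * j) / Z)) = 1"
      using \<open>0 < Z\<close> by simp
  qed
qed

lemma L_mult_enumerator_le:
  fixes a :: "nat \<Rightarrow> real"
  assumes "\<And>l. 0 \<le> a l" "0 < a 0" "\<And>l. odd l \<Longrightarrow> a l = 0"
    and "\<And>i. i \<le> n \<Longrightarrow> 0 \<le> (\<Sum>l\<le>n. kraw n i l * a l)"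
  shows "0 < L n" and "L n * (\<Sum>l\<le>n. kraw n n l * a l) \<le> 3 ^ n * a 0"
proof -
  let ?Z = "\<Sum>l\<le>n. kraw n n l * a l"
  have Z: "0 < ?Z" and feasible: "LP_feasible n (\<lambda>j. a (2 * j) / ?Z)"
    using LP_feasible_normalized_enumerator[of a n] assms by simp_all
  show "0 < L n"
    using feasible by (rule L_pos)
  have "L n \<le> 3 ^ n * (a 0 / ?Z)"
    using L_le_objective[OF feasible] by simp
  then show "L n * ?Z \<le> 3 ^ n * a 0"
    using Z by (simp add: field_simps)
qed

lemma projector_L_bound:
  assumes P: "P \<in> carrier_mat (2 ^ n) (2 ^ n)" "mat_adjoint P = P" "P * P = P"
    and trP: "tr P = 2 ^ k" and odd: "\<And>l. odd l \<Longrightarrow> A_enum n P l = 0"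
  shows "0 < L n" and "L n * (2 ^ n * Re (B_enum n P n)) \<le> 3 ^ n * 4 ^ k"
proof -
  have MacWilliams: "(\<Sum>l\<le>n. kraw n i l * Re (A_enum n P l)) = 2 ^ n * Re (B_enum n P i)"
    if "i \<le> n" for i
    using P(1,2) that by (rule B_enum_MacWilliams_Re)
  note enumerator = A_enum_Re_nonneg[OF P(1,2)] Re_A_enum_0[OF P(1) trP] odd
  have "0 \<le> (\<Sum>l\<le>n. kraw n i l * Re (A_enum n P l))" if "i \<le> n" for i
    using B_enum_Re_nonneg[OF P] MacWilliams[OF that] by simp
  with enumerator show "0 < L n" "L n * (2 ^ n * Re (B_enum n P n)) \<le> 3 ^ n * 4 ^ k"
    using L_mult_enumerator_le[of "\<lambda>l. Re (A_enum n P l)" n] MacWilliams[of n] by simp_all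
qed

theorem proposition6:
  fixes n k :: nat and S :: "complex mat set" and P :: "complex mat"
  assumes "stabilizer_code n k S P"
    and "\<forall>i. SL_A n k P (2 * i + 1) = 0"
  shows "Re (SL_B n k P n) \<le> (1 / L n) * (3 ^ n / 2 ^ (n - k))"
proof -
  have P: "P \<in> carrier_mat (2 ^ n) (2 ^ n)" "mat_adjoint P = P" "P * P = P"
    and trP: "tr P = 2 ^ k"
    using assms(1) by (auto simp: stabilizer_code_def codespace_projector_def)
  have "A_enum n P l = 0" if "odd l" for l
    using assms(2) \<open>odd l\<close> by (auto simp: SL_A_def A_enum_def elim!: oddE)
  from projector_L_bound[OF P trP this]
  have "0 < L n" and bound: "L n * (2 ^ n * Re (B_enum n P n)) \<le> 3 ^ n * 4 ^ k"
    by blast+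
  have "(2::real) ^ n = 2 ^ (n - k) * 2 ^ k"
    using projector_rank_le[OF P trP] by (simp flip: power_add)
  moreover have "(4::real) ^ k = 2 ^ k * 2 ^ k"
    by (simp flip: power_mult_distrib)
  ultimately have "L n * (2 ^ (n - k) * Re (B_enum n P n)) \<le> 3 ^ n * 2 ^ k"
    using bound by (simp add: ac_simps)
  then show ?thesis
    using \<open>0 < L n\<close> by (simp add: SL_B_def B_enum_def field_simps)
qed

end
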